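(* (i) Let $V\in\mathrm{Rep}_{\mathrm{ffd}}(Y_\hbar(\mathfrak g))$ and let $\mu$ be a weight of $V$. Then, for either choice of sign, the poles of $\xi_i(u)_\mu$ are contained in the union of the poles of $x_i^\pm(u)_\mu$ and those of $x_i^\pm(u)_{\mu\mp\alpha_i}$. (ii) Let $\mathcal V\in\mathrm{Rep}_{\mathrm{ffd}}(U_q(L\mathfrak g))$ and let $\mu$ be a weight of $\mathcal V$. Then, for either choice of sign, the poles of $\Psi_i(z)_\mu$ are contained in the union of the poles of $\mathcal X_i^\pm(z)_\mu$ and those of $\mathcal X_i^\pm(z)_{\mu\mp\alpha_i}$.
   Context: $\mathfrak g$ is the Kac–Moody algebra of a symmetrisable generalized Cartan matrix $(a_{ij})_{i,j\in I}$ (symmetrisers $d_i$, realization $(\mathfrak h,\{\alpha_i\},\{\alpha_i^\vee\})$); $\hbar\ne0$; $q$ not a root of unity, $q_i=q^{d_i}$. $Y_\hbar(\mathfrak g)$ and $U_q(L\mathfrak g)$ are the Yangian (generators $h,\xi_{i,r},x^\pm_{i,r}$; in particular $[x^+_{i,r},x^-_{j,s}]=\delta_{ij}\xi_{i,r+s}$) and quantum loop algebra (generators $K_h,\Psi^\pm_{i,\pm r},\mathcal X^\pm_{i,k}$; in particular $[\mathcal X^+_{i,k},\mathcal X^-_{j,l}]=\delta_{ij}\frac{\Psi^+_{i,k+l}-\Psi^-_{i,k+l}}{q_i-q_i^{-1}}$) in Drinfeld's loop presentation. $\mathrm{Rep}_{\mathrm{ffd}}$: modules with finite-dimensional weight spaces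 ($h$ acts by $\mu(h)$, resp. $K_h$ by $q^{\mu(h)}$), weights bounded above by finitely many weights, and for each weight $\mu$ and $i$, $\mu-n\alpha_i$ not a weight for $n\gg0$. For a weight $\mu$, $\xi_i(u)_\mu$ and $x_i^\pm(u)_\mu:V_\mu\to V_{\mu\pm\alpha_i}$ denote the rational functions whose expansions at $u=\infty$ are the actions of $\xi_i(u)=1+\hbar\sum\xi_{i,r}u^{-r-1}$ and $x_i^\pm(u)=\hbar\sum x^\pm_{i,r}u^{-r-1}$ on $V_\mu$; $\Psi_i(z)_\mu$, $\mathcal X_i^\pm(z)_\mu:\mathcal V_\mu\to\mathcal V_{\mu\pm\alpha_i}$ denote the rational functions whose expansions at $z=\infty$ and $z=0$ are $\sum_{r\ge0}\Psi^+_{i,r}z^{-r}$, $\sum_{r\ge0}\Psi^-_{i,-r}z^r$, resp. $\sum_{k\ge0}\mathcal X^\pm_{i,k}z^{-k}$, $-\sum_{k<0}\mathcal X^\pm_{i,k}z^{-k}$. *)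

theory Defs
  imports "HOL-Analysis.Analysis" "HOL-Complex_Analysis.Complex_Analysis"
          "HOL-Computational_Algebra.Polynomial"
begin

text \<open>The index set I is a finite type 'i; the Cartan subalgebra h is complex^'h,
  and its dual is identified with complex^'h via the bilinear pairing below.\<close>

definition pair :: "complex^'h \<Rightarrow> complex^'h \<Rightarrow> complex" where
  "pair mu h = (\<Sum>k\<in>UNIV. mu $ k * h $ k)"

definition gcm :: "('i::finite \<Rightarrow> 'i \<Rightarrow> int) \<Rightarrow> bool" where
  "gcm A \<longleftrightarrow> (\<forall>i. A i i = 2) \<and> (\<forall>i j. i \<noteq> j \<longrightarrow> A i j \<le> 0)
            \<and> (\<forall>i j. A i j = 0 \<longleftrightarrow> A j i = 0)"

definition symmetrisers :: "('i::finite \<Rightarrow> 'i \<Rightarrow> int) \<Rightarrow> ('i \<Rightarrow> nat) \<Rightarrow> bool" where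
  "symmetrisers A d \<longleftrightarrow> (\<forall>i. d i > 0) \<and> (\<forall>i j. int (d i) * A i j = int (d j) * A j i)"

definition cindep :: "('i::finite \<Rightarrow> complex^'h) \<Rightarrow> bool" where
  "cindep v \<longleftrightarrow> (\<forall>c. (\<Sum>i\<in>UNIV. c i *s v i) = 0 \<longrightarrow> (\<forall>i. c i = 0))"

definition realization ::
  "('i::finite \<Rightarrow> 'i \<Rightarrow> int) \<Rightarrow> ('i \<Rightarrow> complex^'h::finite) \<Rightarrow> ('i \<Rightarrow> complex^'h) \<Rightarrow> bool" where
  "realization A alpha coroot \<longleftrightarrow>
     cindep alpha \<and> cindep coroot \<and>
     (\<forall>i j. pair (alpha j) (coroot i) = of_int (A i j)) \<and>
     CARD('h) = 2 * CARD('i) - rank (\<chi> i j. (of_int (A i j) :: complex))"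

text \<open>A module with finite-dimensional weight spaces V = (+)_mu V_mu is encoded by
  dm mu = dim V_mu (so mu is a weight iff dm mu > 0), V_mu = complex^(dm mu), and each
  generator by a family of matrices (functions nat => nat => complex, vanishing outside
  their dimensions) between weight spaces.\<close>

type_synonym cmat = "nat \<Rightarrow> nat \<Rightarrow> complex"

definition supp_mat :: "nat \<Rightarrow> nat \<Rightarrow> cmat \<Rightarrow> bool" where
  "supp_mat r c M \<longleftrightarrow> (\<forall>a b. (r \<le> a \<or> c \<le> b) \<longrightarrow> M a b = 0)"

definition mmul :: "nat \<Rightarrow> cmat \<Rightarrow> cmat \<Rightarrow> cmat" where
  "mmul k M N = (\<lambda>a c. \<Sum>b<k. M a b * N b c)"

definition idm :: "nat \<Rightarrow> cmat" where
  "idm n = (\<lambda>a b. if a = b \<and> a < n then 1 else 0)"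

definition msc :: "complex \<Rightarrow> cmat \<Rightarrow> cmat" where
  "msc c M = (\<lambda>a b. c * M a b)"

text \<open>Action of a word g_1 g_2 ... g_m (g_m applied first) on V_mu:
  returns the target weight and the matrix.\<close>
fun wprod :: "('w::plus \<Rightarrow> nat) \<Rightarrow> ('g \<Rightarrow> 'w) \<Rightarrow> ('g \<Rightarrow> 'w \<Rightarrow> cmat) \<Rightarrow> 'g list \<Rightarrow> 'w \<Rightarrow> 'w \<times> cmat"
  where
  "wprod dm sh op [] mu = (mu, idm (dm mu))"
| "wprod dm sh op (g # w) mu =
     (let (nu, M) = wprod dm sh op w mu in (nu + sh g, mmul (dm nu) (op g nu) M))"

definition act :: "('w::plus \<Rightarrow> nat) \<Rightarrow> ('g \<Rightarrow> 'w) \<Rightarrow> ('g \<Rightarrow> 'w \<Rightarrow> cmat)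
                   \<Rightarrow> (complex \<times> 'g list) list \<Rightarrow> 'w \<Rightarrow> cmat" where
  "act dm sh op L mu = (\<lambda>a b. \<Sum>(c, w)\<leftarrow>L. c * snd (wprod dm sh op w mu) a b)"

text \<open>Nested commutator [g_1,[g_2,...,[g_m,b]...]] as a linear combination of words.\<close>
fun adlc :: "'g \<Rightarrow> (complex \<times> 'g list) list \<Rightarrow> (complex \<times> 'g list) list" where
  "adlc g L = map (\<lambda>(c, w). (c, g # w)) L @ map (\<lambda>(c, w). (- c, w @ [g])) L"

definition nested_comm :: "'g list \<Rightarrow> 'g \<Rightarrow> (complex \<times> 'g list) list" where
  "nested_comm gs b = foldr adlc gs [(1, [b])]"

definition sgn_b :: "bool \<Rightarrow> int" where
  "sgn_b s = (if s then 1 else -1)"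

definition ffd_weights :: "('i::finite \<Rightarrow> complex^'h) \<Rightarrow> (complex^'h \<Rightarrow> nat) \<Rightarrow> bool" where
  "ffd_weights alpha dm \<longleftrightarrow>
     (\<exists>Lam. finite Lam \<and>
        (\<forall>mu. 0 < dm mu \<longrightarrow> (\<exists>lam\<in>Lam. \<exists>k::'i \<Rightarrow> nat. lam = mu + (\<Sum>i\<in>UNIV. of_nat (k i) *s alpha i))))
   \<and> (\<forall>mu i. \<exists>n0. \<forall>n\<ge>n0. dm (mu - of_nat n *s alpha i) = 0)"

datatype 'i ygen = YXi 'i nat | YX bool 'i nat  \<comment> \<open>xi_{i,r};  x^+_{i,r} (True) / x^-_{i,r} (False)\<close>

fun ysh :: "('i \<Rightarrow> complex^'h) \<Rightarrow> 'i ygen \<Rightarrow> complex^'h" where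
  "ysh alpha (YXi i r) = 0"
| "ysh alpha (YX s i r) = of_int (sgn_b s) *s alpha i"

fun yop :: "('i \<Rightarrow> nat \<Rightarrow> complex^'h \<Rightarrow> cmat) \<Rightarrow> (bool \<Rightarrow> 'i \<Rightarrow> nat \<Rightarrow> complex^'h \<Rightarrow> cmat)
            \<Rightarrow> 'i ygen \<Rightarrow> complex^'h \<Rightarrow> cmat" where
  "yop xi x (YXi i r) = xi i r"
| "yop xi x (YX s i r) = x s i r"

text \<open>Drinfeld's loop presentation of Y_hbar(g), relations (Y1)-(Y7), imposed weight space
  by weight space; the relations involving h hold automatically in the graded encoding,
  and xi_{i,0} = d_i alpha_i^vee acts on V_mu by d_i mu(alpha_i^vee).\<close>
definition yangian_rep ::
  "('i::finite \<Rightarrow> 'i \<Rightarrow> int) \<Rightarrow> ('i \<Rightarrow> nat) \<Rightarrow> ('i \<Rightarrow> complex^'h::finite) \<Rightarrow> ('i \<Rightarrow> complex^'h)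
   \<Rightarrow> complex \<Rightarrow> (complex^'h \<Rightarrow> nat)
   \<Rightarrow> ('i \<Rightarrow> nat \<Rightarrow> complex^'h \<Rightarrow> cmat) \<Rightarrow> (bool \<Rightarrow> 'i \<Rightarrow> nat \<Rightarrow> complex^'h \<Rightarrow> cmat) \<Rightarrow> bool" where
  "yangian_rep A d alpha coroot hb dm xi x \<longleftrightarrow>
   (let ac = act dm (ysh alpha) (yop xi x) in
     (\<forall>i r mu. supp_mat (dm mu) (dm mu) (xi i r mu))
   \<and> (\<forall>s i r mu. supp_mat (dm (mu + of_int (sgn_b s) *s alpha i)) (dm mu) (x s i r mu))
   \<comment> \<open>xi_{i,0} = d_i alpha_i^vee\<close>
   \<and> (\<forall>i mu. xi i 0 mu = msc (of_nat (d i) * pair mu (coroot i)) (idm (dm mu)))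
   \<comment> \<open>(Y1) [xi_{i,r}, xi_{j,s}] = 0\<close>
   \<and> (\<forall>i j r t mu. ac [(1, [YXi i r, YXi j t]), (-1, [YXi j t, YXi i r])] mu = (\<lambda>a b. 0))
   \<comment> \<open>[xi_{i,0}, x^+-_{j,t}] = +- d_i a_ij x^+-_{j,t}\<close>
   \<and> (\<forall>s i j t mu. ac [(1, [YXi i 0, YX s j t]), (-1, [YX s j t, YXi i 0])] mu
          = ac [(of_int (sgn_b s * int (d i) * A i j), [YX s j t])] mu)
   \<comment> \<open>(Y4)\<close>
   \<and> (\<forall>s i j r t mu. ac [(1, [YXi i (Suc r), YX s j t]), (-1, [YX s j t, YXi i (Suc r)]),
                          (-1, [YXi i r, YX s j (Suc t)]), (1, [YX s j (Suc t), YXi i r])] mu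
          = ac [(of_int (sgn_b s * int (d i) * A i j) * hb / 2, [YXi i r, YX s j t]),
                (of_int (sgn_b s * int (d i) * A i j) * hb / 2, [YX s j t, YXi i r])] mu)
   \<comment> \<open>(Y5)\<close>
   \<and> (\<forall>s i j r t mu. ac [(1, [YX s i (Suc r), YX s j t]), (-1, [YX s j t, YX s i (Suc r)]),
                          (-1, [YX s i r, YX s j (Suc t)]), (1, [YX s j (Suc t), YX s i r])] mu
          = ac [(of_int (sgn_b s * int (d i) * A i j) * hb / 2, [YX s i r, YX s j t]),
                (of_int (sgn_b s * int (d i) * A i j) * hb / 2, [YX s j t, YX s i r])] mu)
   \<comment> \<open>(Y6) [x^+_{i,r}, x^-_{j,t}] = delta_ij xi_{i,r+t}\<close>
   \<and> (\<forall>i j r t mu. ac [(1, [YX True i r, YX False j t]), (-1, [YX False j t, YX True i r])] mu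
          = (if i = j then ac [(1, [YXi i (r + t)])] mu else (\<lambda>a b. 0)))
   \<comment> \<open>(Y7) Serre relations, m = 1 - a_ij\<close>
   \<and> (\<forall>s i j rs t mu. i \<noteq> j \<longrightarrow>
          (\<lambda>a b. \<Sum>\<pi>\<in>{\<pi>. \<pi> permutes {..<nat (1 - A i j)}}.
              ac (nested_comm (map (\<lambda>k. YX s i (rs (\<pi> k))) [0..<nat (1 - A i j)]) (YX s j t)) mu a b)
          = (\<lambda>a b. 0)))"

datatype 'i qgen = QPsi bool 'i int | QX bool 'i int
  \<comment> \<open>Psi^+_{i,k} (True) / Psi^-_{i,k} (False);  X^+_{i,k} (True) / X^-_{i,k} (False)\<close>

fun qsh :: "('i \<Rightarrow> complex^'h) \<Rightarrow> 'i qgen \<Rightarrow> complex^'h" where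
  "qsh alpha (QPsi e i k) = 0"
| "qsh alpha (QX s i k) = of_int (sgn_b s) *s alpha i"

fun qop :: "(bool \<Rightarrow> 'i \<Rightarrow> int \<Rightarrow> complex^'h \<Rightarrow> cmat) \<Rightarrow> (bool \<Rightarrow> 'i \<Rightarrow> int \<Rightarrow> complex^'h \<Rightarrow> cmat)
            \<Rightarrow> 'i qgen \<Rightarrow> complex^'h \<Rightarrow> cmat" where
  "qop Psi X (QPsi e i k) = Psi e i k"
| "qop Psi X (QX s i k) = X s i k"

text \<open>Complex powers of q are taken with respect to a fixed logarithm lq of q:
  q^x = exp (lq * x).\<close>
definition qpow :: "complex \<Rightarrow> complex \<Rightarrow> complex" where
  "qpow lq x = exp (lq * x)"

definition qint :: "complex \<Rightarrow> nat \<Rightarrow> complex" where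
  "qint v n = (v ^ n - inverse v ^ n) / (v - inverse v)"

definition qfact :: "complex \<Rightarrow> nat \<Rightarrow> complex" where
  "qfact v n = (\<Prod>k\<in>{1..n}. qint v k)"

definition qbinom :: "complex \<Rightarrow> nat \<Rightarrow> nat \<Rightarrow> complex" where
  "qbinom v m s = qfact v m / (qfact v s * qfact v (m - s))"

text \<open>Drinfeld's loop presentation of U_q(Lg), relations (QL1)-(QL7), weight space by
  weight space; K_h acts on V_mu by q^{mu(h)}, and Psi^+-_{i,0} = K_{+-d_i alpha_i^vee},
  Psi^+_{i,k} = 0 for k < 0, Psi^-_{i,k} = 0 for k > 0.\<close>
definition qloop_rep ::
  "('i::finite \<Rightarrow> 'i \<Rightarrow> int) \<Rightarrow> ('i \<Rightarrow> nat) \<Rightarrow> ('i \<Rightarrow> complex^'h::finite) \<Rightarrow> ('i \<Rightarrow> complex^'h)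
   \<Rightarrow> complex \<Rightarrow> (complex^'h \<Rightarrow> nat)
   \<Rightarrow> (bool \<Rightarrow> 'i \<Rightarrow> int \<Rightarrow> complex^'h \<Rightarrow> cmat) \<Rightarrow> (bool \<Rightarrow> 'i \<Rightarrow> int \<Rightarrow> complex^'h \<Rightarrow> cmat) \<Rightarrow> bool" where
  "qloop_rep A d alpha coroot lq dm Psi X \<longleftrightarrow>
   (let ac = act dm (qsh alpha) (qop Psi X); qi = (\<lambda>i. qpow lq (of_nat (d i))) in
     (\<forall>e i k mu. supp_mat (dm mu) (dm mu) (Psi e i k mu))
   \<and> (\<forall>s i k mu. supp_mat (dm (mu + of_int (sgn_b s) *s alpha i)) (dm mu) (X s i k mu))
   \<and> (\<forall>e i k mu. sgn_b e * k < 0 \<longrightarrow> Psi e i k mu = (\<lambda>a b. 0))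
   \<and> (\<forall>e i mu. Psi e i 0 mu
          = msc (qpow lq (of_int (sgn_b e) * of_nat (d i) * pair mu (coroot i))) (idm (dm mu)))
   \<comment> \<open>(QL2) the Psi's commute\<close>
   \<and> (\<forall>e e' i j k l mu. ac [(1, [QPsi e i k, QPsi e' j l]), (-1, [QPsi e' j l, QPsi e i k])] mu
          = (\<lambda>a b. 0))
   \<comment> \<open>(QL4)\<close>
   \<and> (\<forall>e s i j k l mu.
        ac [(1, [QPsi e i (k + 1), QX s j l]),
            (- (qi i powi (sgn_b s * A i j)), [QPsi e i k, QX s j (l + 1)]),
            (- (qi i powi (sgn_b s * A i j)), [QX s j l, QPsi e i (k + 1)]),
            (1, [QX s j (l + 1), QPsi e i k])] mu = (\<lambda>a b. 0))
   \<comment> \<open>(QL5)\<close>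
   \<and> (\<forall>s i j k l mu.
        ac [(1, [QX s i (k + 1), QX s j l]),
            (- (qi i powi (sgn_b s * A i j)), [QX s j l, QX s i (k + 1)]),
            (- (qi i powi (sgn_b s * A i j)), [QX s i k, QX s j (l + 1)]),
            (1, [QX s j (l + 1), QX s i k])] mu = (\<lambda>a b. 0))
   \<comment> \<open>(QL6)\<close>
   \<and> (\<forall>i j k l mu. ac [(1, [QX True i k, QX False j l]), (-1, [QX False j l, QX True i k])] mu
          = (if i = j then ac [(1 / (qi i - inverse (qi i)), [QPsi True i (k + l)]),
                               (- 1 / (qi i - inverse (qi i)), [QPsi False i (k + l)])] mu
             else (\<lambda>a b. 0)))
   \<comment> \<open>(QL7) q-Serre relations, m = 1 - a_ij\<close>
   \<and> (\<forall>s i j ks l mu. i \<noteq> j \<longrightarrow>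
        (let m = nat (1 - A i j) in
          (\<lambda>a b. \<Sum>\<pi>\<in>{\<pi>. \<pi> permutes {..<m}}. \<Sum>p\<le>m.
              ((-1) ^ p * qbinom (qi i) m p) *
              snd (wprod dm (qsh alpha) (qop Psi X)
                     (map (\<lambda>t. QX s i (ks (\<pi> t))) [0..<p] @ [QX s j l]
                      @ map (\<lambda>t. QX s i (ks (\<pi> t))) [p..<m]) mu) a b)
          = (\<lambda>a b. 0))))"

definition rat_fun :: "(complex \<Rightarrow> complex) \<Rightarrow> bool" where
  "rat_fun f \<longleftrightarrow> (\<exists>p q :: complex poly. q \<noteq> 0 \<and> (\<forall>z. poly q z \<noteq> 0 \<longrightarrow> f z = poly p z / poly q z))"

definition rat_mat :: "nat \<Rightarrow> nat \<Rightarrow> (complex \<Rightarrow> cmat) \<Rightarrow> bool" where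
  "rat_mat r c F \<longleftrightarrow> (\<forall>a<r. \<forall>b<c. rat_fun (\<lambda>z. F z a b))"

definition expands_at_infty :: "nat \<Rightarrow> nat \<Rightarrow> (complex \<Rightarrow> cmat) \<Rightarrow> (nat \<Rightarrow> cmat) \<Rightarrow> bool" where
  "expands_at_infty r c F coef \<longleftrightarrow>
     (\<forall>a<r. \<forall>b<c. eventually (\<lambda>u. (\<lambda>n. coef n a b / u ^ n) sums F u a b) at_infinity)"

definition expands_at_zero :: "nat \<Rightarrow> nat \<Rightarrow> (complex \<Rightarrow> cmat) \<Rightarrow> (nat \<Rightarrow> cmat) \<Rightarrow> bool" where
  "expands_at_zero r c F coef \<longleftrightarrow>
     (\<forall>a<r. \<forall>b<c. eventually (\<lambda>z. (\<lambda>n. coef n a b * z ^ n) sums F z a b) (at 0))"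

definition mpoles :: "nat \<Rightarrow> nat \<Rightarrow> (complex \<Rightarrow> cmat) \<Rightarrow> complex set" where
  "mpoles r c F = {z. \<exists>a<r. \<exists>b<c. is_pole (\<lambda>u. F u a b) z}"

end

theory Submission
  imports Defs
begin

text \<open>Summing the relation [x+_{i,r}, x-_{i,0}] = xi_{i,r} (resp. its quantum loop analogue)
  against u^(-r-1) shows that, as series at infinity, F = E + k (H Q - P G), where F, G, H are
  xi_i(u)_mu, x_i^+-(u)_mu, x_i^+-(u)_{mu-+alpha_i}, the matrices E, P, Q are constant and k is
  a scalar. All entries are rational, so this is an identity of functions; near a point that
  is not a pole of G or H the right-hand side has a limit, so F has no pole there.\<close>

lemma eventually_not_in_finite_at:
  fixes z :: "'a::t1_space"
  shows "finite S \<Longrightarrow> eventually (\<lambda>x. x \<notin> S) (at z)"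
  using islimpt_finite[of S z] islimpt_iff_eventually[of z S] by blast

lemma eventually_not_in_finite_at_infinity:
  fixes S :: "'a::real_normed_vector set"
  assumes "finite S"
  shows "eventually (\<lambda>x. x \<notin> S) at_infinity"
proof -
  obtain B where "\<forall>x\<in>S. norm x \<le> B"
    using finite_imp_bounded[OF assms] unfolding bounded_iff by blast
  then show ?thesis by (intro eventually_at_infinityI[of "B + 1"]) force
qed

lemma rat_fun_const: "rat_fun (\<lambda>z. c)"
  unfolding rat_fun_def by (rule exI[of _ "[:c:]"], rule exI[of _ 1]) auto

lemma rat_fun_add: "rat_fun f \<Longrightarrow> rat_fun g \<Longrightarrow> rat_fun (\<lambda>z. f z + g z)"
  unfolding rat_fun_def
proof (elim exE conjE)
  fix p q p' q' :: "complex poly"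
  assume "q \<noteq> 0" "\<forall>z. poly q z \<noteq> 0 \<longrightarrow> f z = poly p z / poly q z"
     "q' \<noteq> 0" "\<forall>z. poly q' z \<noteq> 0 \<longrightarrow> g z = poly p' z / poly q' z"
  then show "\<exists>p q. q \<noteq> 0 \<and> (\<forall>z. poly q z \<noteq> 0 \<longrightarrow> f z + g z = poly p z / poly q z)"
    by (intro exI[of _ "p * q' + p' * q"] exI[of _ "q * q'"]) (auto simp: field_simps)
qed

lemma rat_fun_mult: "rat_fun f \<Longrightarrow> rat_fun g \<Longrightarrow> rat_fun (\<lambda>z. f z * g z)"
  unfolding rat_fun_def
proof (elim exE conjE)
  fix p q p' q' :: "complex poly"
  assume "q \<noteq> 0" "\<forall>z. poly q z \<noteq> 0 \<longrightarrow> f z = poly p z / poly q z"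
     "q' \<noteq> 0" "\<forall>z. poly q' z \<noteq> 0 \<longrightarrow> g z = poly p' z / poly q' z"
  then show "\<exists>p q. q \<noteq> 0 \<and> (\<forall>z. poly q z \<noteq> 0 \<longrightarrow> f z * g z = poly p z / poly q z)"
    by (intro exI[of _ "p * p'"] exI[of _ "q * q'"]) auto
qed

lemma rat_fun_diff: "rat_fun f \<Longrightarrow> rat_fun g \<Longrightarrow> rat_fun (\<lambda>z. f z - g z)"
  using rat_fun_add[of f "\<lambda>z. (-1) * g z"] rat_fun_mult[OF rat_fun_const, of g "-1"] by simp

lemma rat_fun_sum: "(\<And>c. c \<in> S \<Longrightarrow> rat_fun (f c)) \<Longrightarrow> rat_fun (\<lambda>z. \<Sum>c\<in>S. f c z)"
  by (induction S rule: infinite_finite_induct) (simp_all add: rat_fun_const rat_fun_add)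

lemma rat_fun_not_essential:
  assumes "rat_fun g"
  shows "not_essential g z"
proof -
  obtain p q where q: "q \<noteq> 0" and g: "\<And>z. poly q z \<noteq> 0 \<Longrightarrow> g z = poly p z / poly q z"
    using assms unfolding rat_fun_def by blast
  have poly_analytic: "(\<lambda>w. poly r w) analytic_on {z}" for r :: "complex poly"
    unfolding analytic_on_holomorphic
    by (intro exI[of _ UNIV]) (auto intro!: poly_holomorphic_on holomorphic_on_id)
  have "not_essential (\<lambda>w. poly p w / poly q w) z"
    by (intro not_essential_divide not_essential_analytic isolated_singularity_at_analytic
        poly_analytic)
  moreover have "eventually (\<lambda>w. poly p w / poly q w = g w) (at z)"
    using eventually_not_in_finite_at[OF poly_roots_finite[OF q]] by eventually_elim (simp add: g)
  ultimately show ?thesis by (rule not_essential_transform)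
qed

lemma rat_fun_tendsto_if_not_pole:
  assumes "rat_fun g" "\<not> is_pole g z"
  shows "\<exists>l. (g \<longlongrightarrow> l) (at z)"
  using rat_fun_not_essential[OF assms(1), of z] assms(2) unfolding not_essential_def by blast

lemma rat_fun_eventually_zero_at:
  assumes "rat_fun f" "eventually (\<lambda>u. f u = 0) at_infinity"
  shows "eventually (\<lambda>u. f u = 0) (at z)"
proof -
  obtain p q where q: "q \<noteq> 0" and f: "\<And>z. poly q z \<noteq> 0 \<Longrightarrow> f z = poly p z / poly q z"
    using assms(1) unfolding rat_fun_def by blast
  have p: "p = 0"
  proof (rule ccontr)
    assume "p \<noteq> 0"
    from eventually_not_in_finite_at_infinity[OF poly_roots_finite[OF this]]
      eventually_not_in_finite_at_infinity[OF poly_roots_finite[OF q]] assms(2)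
    have "eventually (\<lambda>u. poly p u \<noteq> 0 \<and> poly q u \<noteq> 0 \<and> f u = 0) at_infinity"
      by eventually_elim auto
    then obtain u where "poly p u \<noteq> 0" "poly q u \<noteq> 0" "f u = 0"
      using eventually_happens' trivial_limit_at_infinity by blast
    then show False using f[of u] by simp
  qed
  from eventually_not_in_finite_at[OF poly_roots_finite[OF q]]
  show ?thesis by eventually_elim (simp add: f p)
qed

lemma rat_fun_eventually_eq_at:
  assumes "rat_fun f" "rat_fun g" "eventually (\<lambda>u. f u = g u) at_infinity"
  shows "eventually (\<lambda>u. f u = g u) (at z)"
  using rat_fun_eventually_zero_at[OF rat_fun_diff[OF assms(1,2)], of z] assms(3) by simp

lemma msc_apply: "msc c M a b = c * M a b"
  by (simp add: msc_def)

lemma mmul_msc_left: "mmul k (msc c M) N a b = c * mmul k M N a b"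
  by (simp add: mmul_def msc_def sum_distrib_left mult.assoc)

lemma mmul_msc_right: "mmul k M (msc c N) a b = c * mmul k M N a b"
  by (simp add: mmul_def msc_def sum_distrib_left mult.left_commute)

lemma mmul_zero_left [simp]: "mmul k (\<lambda>a b. 0) N = (\<lambda>a b. 0)"
  by (simp add: mmul_def)

lemma mmul_zero_right [simp]: "mmul k M (\<lambda>a b. 0) = (\<lambda>a b. 0)"
  by (simp add: mmul_def)

lemma mmul_idm_right: "b < n \<Longrightarrow> mmul n M (idm n) a b = M a b"
  unfolding mmul_def idm_def by (simp add: if_distrib cong: if_cong)

lemma mmul_mmul_idm_right: "b < n \<Longrightarrow> mmul k M (mmul n N (idm n)) a b = mmul k M N a b"
  unfolding mmul_def by (simp add: mmul_idm_right[unfolded mmul_def])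

lemma rat_fun_mmul_right:
  assumes "rat_mat r k H" "a < r"
  shows "rat_fun (\<lambda>u. mmul k (H u) Q a b)"
  unfolding mmul_def using assms
  by (intro rat_fun_sum rat_fun_mult rat_fun_const) (auto simp: rat_mat_def)

lemma rat_fun_mmul_left:
  assumes "rat_mat k c G" "b < c"
  shows "rat_fun (\<lambda>u. mmul k P (G u) a b)"
  unfolding mmul_def using assms
  by (intro rat_fun_sum rat_fun_mult rat_fun_const) (auto simp: rat_mat_def)

lemma expands_at_infty_mmul_right:
  assumes "expands_at_infty r k H hc" "a < r"
  shows "eventually (\<lambda>u. (\<lambda>n. mmul k (hc n) Q a b / u ^ n) sums mmul k (H u) Q a b) at_infinity"
proof -
  have "eventually (\<lambda>u. \<forall>c\<in>{..<k}. (\<lambda>n. hc n a c / u ^ n) sums H u a c) at_infinity"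
    using assms by (intro eventually_ball_finite) (auto simp: expands_at_infty_def)
  then show ?thesis
  proof eventually_elim
    case (elim u)
    then have "(\<lambda>n. \<Sum>c<k. hc n a c / u ^ n * Q c b) sums (\<Sum>c<k. H u a c * Q c b)"
      by (intro sums_sum sums_mult2) auto
    then show ?case by (simp add: mmul_def sum_divide_distrib)
  qed
qed

lemma expands_at_infty_mmul_left:
  assumes "expands_at_infty k c G gc" "b < c"
  shows "eventually (\<lambda>u. (\<lambda>n. mmul k P (gc n) a b / u ^ n) sums mmul k P (G u) a b) at_infinity"
proof -
  have "eventually (\<lambda>u. \<forall>c\<in>{..<k}. (\<lambda>n. gc n c b / u ^ n) sums G u c b) at_infinity"
    using assms by (intro eventually_ball_finite) (auto simp: expands_at_infty_def)
  then show ?thesis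
  proof eventually_elim
    case (elim u)
    then have "(\<lambda>n. \<Sum>c<k. P a c * (gc n c b / u ^ n)) sums (\<Sum>c<k. P a c * G u c b)"
      by (intro sums_sum sums_mult) auto
    then show ?case by (simp add: mmul_def sum_divide_distrib)
  qed
qed

lemma mmul_right_tendsto_if_not_mpole:
  assumes "rat_mat r k H" "z \<notin> mpoles r k H" "a < r"
  shows "\<exists>l. ((\<lambda>u. mmul k (H u) Q a b) \<longlongrightarrow> l) (at z)"
proof -
  have "\<forall>c\<in>{..<k}. \<exists>l. ((\<lambda>u. H u a c) \<longlongrightarrow> l) (at z)"
    using assms by (auto simp: mpoles_def rat_mat_def intro!: rat_fun_tendsto_if_not_pole)
  then obtain l where "\<And>c. c < k \<Longrightarrow> ((\<lambda>u. H u a c) \<longlongrightarrow> l c) (at z)"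
    by (metis lessThan_iff)
  then have "((\<lambda>u. mmul k (H u) Q a b) \<longlongrightarrow> (\<Sum>c<k. l c * Q c b)) (at z)"
    unfolding mmul_def by (intro tendsto_sum tendsto_mult tendsto_const) auto
  then show ?thesis by blast
qed

lemma mmul_left_tendsto_if_not_mpole:
  assumes "rat_mat k c G" "z \<notin> mpoles k c G" "b < c"
  shows "\<exists>l. ((\<lambda>u. mmul k P (G u) a b) \<longlongrightarrow> l) (at z)"
proof -
  have "\<forall>c\<in>{..<k}. \<exists>l. ((\<lambda>u. G u c b) \<longlongrightarrow> l) (at z)"
    using assms by (auto simp: mpoles_def rat_mat_def intro!: rat_fun_tendsto_if_not_pole)
  then obtain l where "\<And>c. c < k \<Longrightarrow> ((\<lambda>u. G u c b) \<longlongrightarrow> l c) (at z)"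
    by (metis lessThan_iff)
  then have "((\<lambda>u. mmul k P (G u) a b) \<longlongrightarrow> (\<Sum>c<k. P a c * l c)) (at z)"
    unfolding mmul_def by (intro tendsto_sum tendsto_mult tendsto_const) auto
  then show ?thesis by blast
qed

lemma commutator_expansion_eventually_eq:
  fixes F G H :: "complex \<Rightarrow> cmat" and fc gc hc :: "nat \<Rightarrow> cmat" and P Q E :: cmat
  assumes eF: "expands_at_infty dF dF F fc" and eG: "expands_at_infty dG dF G gc"
    and eH: "expands_at_infty dF dH H hc"
    and coeffs: "\<And>n. fc n a b = (if n = 0 then E a b else 0)
         + \<kappa> * (mmul dH (hc n) Q a b - mmul dG P (gc n) a b)"
    and ab: "a < dF" "b < dF"
  shows "eventually (\<lambda>u. F u a b = E a b + \<kappa> * (mmul dH (H u) Q a b - mmul dG P (G u) a b))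
           at_infinity"
  using eF[unfolded expands_at_infty_def, rule_format, OF ab]
    expands_at_infty_mmul_right[OF eH ab(1), of Q b]
    expands_at_infty_mmul_left[OF eG ab(2), of P a]
proof eventually_elim
  case (elim u)
  have "(\<lambda>n. (if n = 0 then E a b else 0)
          + \<kappa> * (mmul dH (hc n) Q a b / u ^ n - mmul dG P (gc n) a b / u ^ n))
        sums (E a b + \<kappa> * (mmul dH (H u) Q a b - mmul dG P (G u) a b))"
    using elim(2,3) sums_single[of 0 "\<lambda>_. E a b"] by (intro sums_add sums_mult sums_diff)
  moreover have "(if n = 0 then E a b else 0)
          + \<kappa> * (mmul dH (hc n) Q a b / u ^ n - mmul dG P (gc n) a b / u ^ n)
        = fc n a b / u ^ n" for n
    by (cases "n = 0") (simp_all add: coeffs add_divide_distrib diff_divide_distrib right_diff_distrib)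
  ultimately show ?case using elim(1) sums_unique2 by simp
qed

lemma mpoles_subset_of_commutator_expansion:
  fixes F G H :: "complex \<Rightarrow> cmat" and fc gc hc :: "nat \<Rightarrow> cmat" and P Q E :: cmat
  assumes rF: "rat_mat dF dF F" and eF: "expands_at_infty dF dF F fc"
    and rG: "rat_mat dG dF G" and eG: "expands_at_infty dG dF G gc"
    and rH: "rat_mat dF dH H" and eH: "expands_at_infty dF dH H hc"
    and coeffs: "\<And>n a b. a < dF \<Longrightarrow> b < dF \<Longrightarrow> fc n a b = (if n = 0 then E a b else 0)
         + \<kappa> * (mmul dH (hc n) Q a b - mmul dG P (gc n) a b)"
  shows "mpoles dF dF F \<subseteq> mpoles dG dF G \<union> mpoles dF dH H"
proof
  fix z assume "z \<in> mpoles dF dF F"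
  then obtain a b where ab: "a < dF" "b < dF" and pole: "is_pole (\<lambda>u. F u a b) z"
    unfolding mpoles_def by blast
  show "z \<in> mpoles dG dF G \<union> mpoles dF dH H"
  proof (rule ccontr)
    assume "z \<notin> mpoles dG dF G \<union> mpoles dF dH H"
    then obtain lH lG
      where lH: "((\<lambda>u. mmul dH (H u) Q a b) \<longlongrightarrow> lH) (at z)"
        and lG: "((\<lambda>u. mmul dG P (G u) a b) \<longlongrightarrow> lG) (at z)"
      using mmul_right_tendsto_if_not_mpole[OF rH _ ab(1)]
        mmul_left_tendsto_if_not_mpole[OF rG _ ab(2)] by blast
    define K where "K u = E a b + \<kappa> * (mmul dH (H u) Q a b - mmul dG P (G u) a b)" for u
    have "rat_fun K"
      unfolding K_def using rG rH ab
      by (intro rat_fun_add rat_fun_const rat_fun_mult rat_fun_diff rat_fun_mmul_left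
          rat_fun_mmul_right)
    moreover have "eventually (\<lambda>u. F u a b = K u) at_infinity"
      unfolding K_def using coeffs[OF ab] by (rule commutator_expansion_eventually_eq[OF eF eG eH _ ab])
    ultimately have "eventually (\<lambda>u. F u a b = K u) (at z)"
      using rF ab by (intro rat_fun_eventually_eq_at) (auto simp: rat_mat_def)
    moreover have "(K \<longlongrightarrow> E a b + \<kappa> * (lH - lG)) (at z)"
      unfolding K_def[abs_def] using lH lG by (intro tendsto_intros)
    ultimately have "((\<lambda>u. F u a b) \<longlongrightarrow> E a b + \<kappa> * (lH - lG)) (at z)"
      by (simp add: tendsto_cong)
    then show False
      using pole not_tendsto_and_filterlim_at_infinity[of "at z" "\<lambda>u. F u a b"]
      unfolding is_pole_def by auto
  qed
qed

lemma act_single_word: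
  "b < dm mu \<Longrightarrow> act dm sh op [(c, [g])] mu a b = c * op g mu a b"
  by (simp add: act_def mmul_idm_right)

lemma act_commutator:
  "b < dm mu \<Longrightarrow> act dm sh op [(1, [g, h]), (-1, [h, g])] mu a b
     = mmul (dm (mu + sh h)) (op g (mu + sh h)) (op h mu) a b
       - mmul (dm (mu + sh g)) (op h (mu + sh g)) (op g mu) a b"
  by (simp add: act_def mmul_mmul_idm_right)

lemma yangian_rep_xi_eq_commutator:
  assumes "yangian_rep A d alpha coroot hb dm xi x" "b < dm mu"
  shows "xi i (r + t) mu a b
     = mmul (dm (mu - alpha i)) (x True i r (mu - alpha i)) (x False i t mu) a b
       - mmul (dm (mu + alpha i)) (x False i t (mu + alpha i)) (x True i r mu) a b"
proof -
  have "act dm (ysh alpha) (yop xi x) [(1, [YX True i r, YX False i t]),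
          (-1, [YX False i t, YX True i r])] mu
      = act dm (ysh alpha) (yop xi x) [(1, [YXi i (r + t)])] mu"
    using assms(1) unfolding yangian_rep_def Let_def by auto
  from fun_cong[OF fun_cong[OF this, of a], of b] show ?thesis
    using assms(2) by (simp add: act_commutator act_single_word sgn_b_def)
qed

lemma yangian_rep_xi_eq_signed_commutator:
  fixes s :: bool and i :: "'i::finite"
  assumes "yangian_rep A d alpha coroot hb dm xi x" "b < dm mu"
  defines "\<sigma> \<equiv> of_int (sgn_b s) *s alpha i"
  shows "xi i r mu a b = of_int (sgn_b s) *
      (mmul (dm (mu - \<sigma>)) (x s i r (mu - \<sigma>)) (x (\<not> s) i 0 mu) a b
       - mmul (dm (mu + \<sigma>)) (x (\<not> s) i 0 (mu + \<sigma>)) (x s i r mu) a b)"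
proof (cases s)
  case True
  then show ?thesis
    using yangian_rep_xi_eq_commutator[OF assms(1,2), of i r 0] by (simp add: \<sigma>_def sgn_b_def)
next
  case False
  then show ?thesis
    using yangian_rep_xi_eq_commutator[OF assms(1,2), of i 0 r] by (simp add: \<sigma>_def sgn_b_def)
qed

lemma yangian_rep_xi_series_coeff:
  fixes s :: bool and i :: "'i::finite"
  assumes rep: "yangian_rep A d alpha coroot hb dm xi x" and b: "b < dm mu"
  defines "\<sigma> \<equiv> of_int (sgn_b s) *s alpha i"
  shows "(if n = 0 then idm (dm mu) else msc hb (xi i (n - 1) mu)) a b
    = (if n = 0 then idm (dm mu) a b else 0) + of_int (sgn_b s) *
      (mmul (dm (mu - \<sigma>)) (if n = 0 then (\<lambda>a b. 0) else msc hb (x s i (n - 1) (mu - \<sigma>)))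
          (x (\<not> s) i 0 mu) a b
       - mmul (dm (mu + \<sigma>)) (x (\<not> s) i 0 (mu + \<sigma>))
          (if n = 0 then (\<lambda>a b. 0) else msc hb (x s i (n - 1) mu)) a b)"
proof (cases n)
  case (Suc m)
  with yangian_rep_xi_eq_signed_commutator[OF rep b, where s = s and i = i and r = m and a = a]
  show ?thesis unfolding \<sigma>_def by (simp add: msc_apply mmul_msc_left mmul_msc_right right_diff_distrib)
qed simp

lemma yangian_rep_mpoles_xi:
  fixes s :: bool and i :: "'i::finite"
  assumes rep: "yangian_rep A d alpha coroot hb dm xi x"
  defines "\<sigma> \<equiv> of_int (sgn_b s) *s alpha i"
  assumes rF: "rat_mat (dm mu) (dm mu) F"
    and eF: "expands_at_infty (dm mu) (dm mu) F
          (\<lambda>n. if n = 0 then idm (dm mu) else msc hb (xi i (n - 1) mu))"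
    and rG: "rat_mat (dm (mu + \<sigma>)) (dm mu) G"
    and eG: "expands_at_infty (dm (mu + \<sigma>)) (dm mu) G
          (\<lambda>n. if n = 0 then (\<lambda>a b. 0) else msc hb (x s i (n - 1) mu))"
    and rH: "rat_mat (dm mu) (dm (mu - \<sigma>)) H"
    and eH: "expands_at_infty (dm mu) (dm (mu - \<sigma>)) H
          (\<lambda>n. if n = 0 then (\<lambda>a b. 0) else msc hb (x s i (n - 1) (mu - \<sigma>)))"
  shows "mpoles (dm mu) (dm mu) F \<subseteq> mpoles (dm (mu + \<sigma>)) (dm mu) G \<union> mpoles (dm mu) (dm (mu - \<sigma>)) H"
  by (rule mpoles_subset_of_commutator_expansion[OF rF eF rG eG rH eH,
        where E = "idm (dm mu)" and \<kappa> = "of_int (sgn_b s)"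
          and Q = "x (\<not> s) i 0 mu" and P = "x (\<not> s) i 0 (mu + \<sigma>)"])
     (unfold \<sigma>_def, rule yangian_rep_xi_series_coeff[OF rep])

lemma qpow_diff_inverse_nonzero:
  assumes "0 < n" "\<forall>m::nat. 0 < m \<longrightarrow> exp lq ^ m \<noteq> 1"
  shows "qpow lq (of_nat n) - inverse (qpow lq (of_nat n)) \<noteq> 0"
proof
  let ?e = "qpow lq (of_nat n)"
  assume "?e - inverse ?e = 0"
  moreover have "?e \<noteq> 0" by (simp add: qpow_def)
  ultimately have "?e ^ 2 = 1" by (simp add: field_simps power2_eq_square)
  moreover have "?e = exp lq ^ n"
    unfolding qpow_def by (metis exp_of_nat_mult mult.commute)
  ultimately have "exp lq ^ (2 * n) = 1" by (simp add: power_mult mult.commute)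
  then show False using assms by simp
qed

lemma qloop_rep_Psi_minus_vanish:
  "qloop_rep A d alpha coroot lq dm Psi X \<Longrightarrow> 0 < n \<Longrightarrow> Psi False i (int n) mu = (\<lambda>a b. 0)"
  unfolding qloop_rep_def Let_def by (auto simp: sgn_b_def)

lemma qloop_rep_Psi_diff_eq_commutator:
  fixes i :: "'i::finite"
  assumes rep: "qloop_rep A d alpha coroot lq dm Psi X" and b: "b < dm mu"
  defines "c \<equiv> qpow lq (of_nat (d i)) - inverse (qpow lq (of_nat (d i)))"
  assumes "c \<noteq> 0"
  shows "Psi True i (k + l) mu a b - Psi False i (k + l) mu a b
     = c * (mmul (dm (mu - alpha i)) (X True i k (mu - alpha i)) (X False i l mu) a b
       - mmul (dm (mu + alpha i)) (X False i l (mu + alpha i)) (X True i k mu) a b)"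
proof -
  have "act dm (qsh alpha) (qop Psi X) [(1, [QX True i k, QX False i l]),
          (-1, [QX False i l, QX True i k])] mu
      = act dm (qsh alpha) (qop Psi X) [(1 / c, [QPsi True i (k + l)]),
          (- 1 / c, [QPsi False i (k + l)])] mu"
    using rep unfolding qloop_rep_def Let_def c_def by auto
  from fun_cong[OF fun_cong[OF this, of a], of b] show ?thesis
    using b \<open>c \<noteq> 0\<close>
    by (simp add: act_def mmul_idm_right mmul_mmul_idm_right sgn_b_def field_simps)
qed

lemma qloop_rep_Psi_plus_eq_signed_commutator:
  fixes s :: bool and i :: "'i::finite"
  assumes rep: "qloop_rep A d alpha coroot lq dm Psi X" and b: "b < dm mu"
  defines "c \<equiv> qpow lq (of_nat (d i)) - inverse (qpow lq (of_nat (d i)))"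
    and "\<sigma> \<equiv> of_int (sgn_b s) *s alpha i"
  assumes "c \<noteq> 0"
  shows "Psi True i (int n) mu a b = (if n = 0 then Psi False i 0 mu a b else 0)
      + c * of_int (sgn_b s) *
        (mmul (dm (mu - \<sigma>)) (X s i (int n) (mu - \<sigma>)) (X (\<not> s) i 0 mu) a b
         - mmul (dm (mu + \<sigma>)) (X (\<not> s) i 0 (mu + \<sigma>)) (X s i (int n) mu) a b)"
proof -
  have minus: "Psi False i (int n) mu a b = (if n = 0 then Psi False i 0 mu a b else 0)"
    using qloop_rep_Psi_minus_vanish[OF rep, of n i mu] by auto
  show ?thesis
  proof (cases s)
    case True
    then show ?thesis
      using qloop_rep_Psi_diff_eq_commutator[OF rep b \<open>c \<noteq> 0\<close>[unfolded c_def], of "int n" 0 a]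
      unfolding c_def[symmetric] by (simp add: minus \<sigma>_def sgn_b_def algebra_simps)
  next
    case False
    then show ?thesis
      using qloop_rep_Psi_diff_eq_commutator[OF rep b \<open>c \<noteq> 0\<close>[unfolded c_def], of 0 "int n" a]
      unfolding c_def[symmetric] by (simp add: minus \<sigma>_def sgn_b_def algebra_simps)
  qed
qed

lemma qloop_rep_mpoles_Psi:
  fixes s :: bool and i :: "'i::finite"
  assumes rep: "qloop_rep A d alpha coroot lq dm Psi X"
  defines "c \<equiv> qpow lq (of_nat (d i)) - inverse (qpow lq (of_nat (d i)))"
    and "\<sigma> \<equiv> of_int (sgn_b s) *s alpha i"
  assumes "c \<noteq> 0"
    and rF: "rat_mat (dm mu) (dm mu) F"
    and eF: "expands_at_infty (dm mu) (dm mu) F (\<lambda>n. Psi True i (int n) mu)"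
    and rG: "rat_mat (dm (mu + \<sigma>)) (dm mu) G"
    and eG: "expands_at_infty (dm (mu + \<sigma>)) (dm mu) G (\<lambda>n. X s i (int n) mu)"
    and rH: "rat_mat (dm mu) (dm (mu - \<sigma>)) H"
    and eH: "expands_at_infty (dm mu) (dm (mu - \<sigma>)) H (\<lambda>n. X s i (int n) (mu - \<sigma>))"
  shows "mpoles (dm mu) (dm mu) F \<subseteq> mpoles (dm (mu + \<sigma>)) (dm mu) G \<union> mpoles (dm mu) (dm (mu - \<sigma>)) H"
  by (rule mpoles_subset_of_commutator_expansion[OF rF eF rG eG rH eH,
        where E = "Psi False i 0 mu" and \<kappa> = "c * of_int (sgn_b s)"
          and Q = "X (\<not> s) i 0 mu" and P = "X (\<not> s) i 0 (mu + \<sigma>)"])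
     (unfold c_def \<sigma>_def,
      rule qloop_rep_Psi_plus_eq_signed_commutator[OF rep _ \<open>c \<noteq> 0\<close>[unfolded c_def]])

theorem lemma3p7:
  fixes A :: "'i::finite \<Rightarrow> 'i \<Rightarrow> int" and d :: "'i \<Rightarrow> nat"
    and alpha coroot :: "'i \<Rightarrow> complex^'h::finite"
    and hb lq :: complex
  assumes "gcm A" and "symmetrisers A d" and "realization A alpha coroot"
    and "hb \<noteq> 0"
    and "\<forall>n::nat. 0 < n \<longrightarrow> exp lq ^ n \<noteq> 1"
  shows
   "(\<forall>dm xi x s i mu F G H.
       yangian_rep A d alpha coroot hb dm xi x \<and> ffd_weights alpha dm \<and> 0 < dm mu \<and>
       rat_mat (dm mu) (dm mu) F \<and>
       expands_at_infty (dm mu) (dm mu) F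
         (\<lambda>n. if n = 0 then idm (dm mu) else msc hb (xi i (n - 1) mu)) \<and>
       rat_mat (dm (mu + of_int (sgn_b s) *s alpha i)) (dm mu) G \<and>
       expands_at_infty (dm (mu + of_int (sgn_b s) *s alpha i)) (dm mu) G
         (\<lambda>n. if n = 0 then (\<lambda>a b. 0) else msc hb (x s i (n - 1) mu)) \<and>
       rat_mat (dm mu) (dm (mu - of_int (sgn_b s) *s alpha i)) H \<and>
       expands_at_infty (dm mu) (dm (mu - of_int (sgn_b s) *s alpha i)) H
         (\<lambda>n. if n = 0 then (\<lambda>a b. 0) else msc hb (x s i (n - 1) (mu - of_int (sgn_b s) *s alpha i)))
     \<longrightarrow> mpoles (dm mu) (dm mu) F
           \<subseteq> mpoles (dm (mu + of_int (sgn_b s) *s alpha i)) (dm mu) G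
             \<union> mpoles (dm mu) (dm (mu - of_int (sgn_b s) *s alpha i)) H)
  \<and> (\<forall>dm Psi X s i mu F G H.
       qloop_rep A d alpha coroot lq dm Psi X \<and> ffd_weights alpha dm \<and> 0 < dm mu \<and>
       rat_mat (dm mu) (dm mu) F \<and>
       expands_at_infty (dm mu) (dm mu) F (\<lambda>n. Psi True i (int n) mu) \<and>
       expands_at_zero (dm mu) (dm mu) F (\<lambda>n. Psi False i (- int n) mu) \<and>
       rat_mat (dm (mu + of_int (sgn_b s) *s alpha i)) (dm mu) G \<and>
       expands_at_infty (dm (mu + of_int (sgn_b s) *s alpha i)) (dm mu) G
         (\<lambda>n. X s i (int n) mu) \<and>
       expands_at_zero (dm (mu + of_int (sgn_b s) *s alpha i)) (dm mu) G
         (\<lambda>n. if n = 0 then (\<lambda>a b. 0) else msc (-1) (X s i (- int n) mu)) \<and>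
       rat_mat (dm mu) (dm (mu - of_int (sgn_b s) *s alpha i)) H \<and>
       expands_at_infty (dm mu) (dm (mu - of_int (sgn_b s) *s alpha i)) H
         (\<lambda>n. X s i (int n) (mu - of_int (sgn_b s) *s alpha i)) \<and>
       expands_at_zero (dm mu) (dm (mu - of_int (sgn_b s) *s alpha i)) H
         (\<lambda>n. if n = 0 then (\<lambda>a b. 0) else msc (-1) (X s i (- int n) (mu - of_int (sgn_b s) *s alpha i)))
     \<longrightarrow> mpoles (dm mu) (dm mu) F
           \<subseteq> mpoles (dm (mu + of_int (sgn_b s) *s alpha i)) (dm mu) G
             \<union> mpoles (dm mu) (dm (mu - of_int (sgn_b s) *s alpha i)) H)"
proof (intro conjI allI impI, goal_cases)
  case (1 dm xi x s i mu F G H)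
  then show ?case by (elim conjE) (rule yangian_rep_mpoles_xi)
next
  case (2 dm Psi X s i mu F G H)
  moreover have "qpow lq (of_nat (d i)) - inverse (qpow lq (of_nat (d i))) \<noteq> 0"
    using assms(2,5) by (intro qpow_diff_inverse_nonzero) (auto simp: symmetrisers_def)
  ultimately show ?case by (elim conjE) (rule qloop_rep_mpoles_Psi)
qed

end
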